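(* Let $J-CI=L^{(1)}\cdots L^{(p)}U$ be a Darboux factorization and, for each $j=0,1,\ldots,p$, let $\nu^{(j)}=(\nu^{(j)}_1,\ldots,\nu^{(j)}_p)$ be a vector of $p$-orthogonality for $\{P^{(j)}_n\}$. Then for each $j=0,1,\ldots,p-1$: (a) $\big(\nu^{(j+1)}_1,\ldots,\nu^{(j+1)}_{p-1},\,(z-C)\nu^{(j)}_1\big)$ is a vector of $p$-orthogonality for $\{P^{(j+1)}_n\}$; (b) $\big(\nu^{(j)}_1,\,\nu^{(j+1)}_1,\ldots,\nu^{(j+1)}_{p-1}\big)$ is a vector of $p$-orthogonality for $\{P^{(j)}_n\}$.
   Context: Fix $p\in\mathbb{N}$. Let $J=(a_{n,m})_{n,m\ge0}$ be an infinite matrix with $a_{n,n+1}=1$, $a_{n,m}=0$ for $m>n+1$ or $m<n-p$, and $a_{n+p,n}\neq0$ for all $n\ge0$. Define polynomials by $P_{-p}=\cdots=P_{-1}=0$, $P_0\equiv1$, $P_{n+1}(z)=(z-a_{n,n})P_n(z)-\sum_{i=1}^p a_{n,n-i}P_{n-i}(z)$ for $n\ge0$. Fix $C\in\mathbb{C}$ with $P_n(C)\neq0$ for all $n\ge1$. A Darboux factorization of $J-CI$ is a factorization $J-CI=L^{(1)}L^{(2)}\cdots L^{(p)}U$ where, indexing rows and columns by $1,2,\ldots$, $U$ is upper bidiagonal with $U_{k,k}=\gamma_{(k-1)(p+1)+1}$, $U_{k,k+1}=1$, and for $j=1,\ldots,p$, $L^{(j)}$ is lower bidiagonal with ones on the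 diagonal and $L^{(j)}_{k+1,k}=\gamma_{(k-1)(p+1)+j+1}\neq0$ for all $k\ge1$ (the $\gamma_i$ being complex numbers). Its Darboux transformations are $J^{(j)}=CI+L^{(j+1)}\cdots L^{(p)}UL^{(1)}\cdots L^{(j)}$, $j=1,\ldots,p$; also $J^{(0)}:=J$. Each $J^{(j)}$ is lower Hessenberg with ones on the superdiagonal, and $\{P^{(j)}_n\}_{n\ge0}$ denotes the unique sequence of polynomials with $P^{(j)}_0\equiv1$ such that $v^{(j)}(z)=(P^{(j)}_0(z),P^{(j)}_1(z),\ldots)^T$ satisfies $J^{(j)}v^{(j)}(z)=zv^{(j)}(z)$; $P^{(0)}_n=P_n$. A vector of $p$-orthogonality for a sequence of polynomials $\{Q_n\}$ is a vector $(\nu_1,\ldots,\nu_p)$ of linear functionals on polynomials with, for each $r=1,\ldots,p$ and $k=0,1,\ldots$: $\nu_r[z^kQ_n]=0$ for all $n\ge kp+r$, and $\nu_r[z^kQ_{kp+r-1}]\neq0$. For a functional $\mu$, $(z-C)\mu$ is the functional $q\mapsto\mu[(z-C)q]$. *)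

theory Defs
  imports "HOL-Computational_Algebra.Polynomial"
begin

text \<open>Infinite matrices, rows and columns indexed from 0 (paper index k corresponds to k-1 here).\<close>
type_synonym imat = "nat \<Rightarrow> nat \<Rightarrow> complex"

text \<open>Product of row-finite infinite matrices (all matrices below are row-finite).\<close>
definition mmul :: "imat \<Rightarrow> imat \<Rightarrow> imat" where
  "mmul A B = (\<lambda>n m. \<Sum>k\<in>{k. A n k \<noteq> 0}. A n k * B k m)"

definition idm :: imat where
  "idm = (\<lambda>n m. if n = m then 1 else 0)"

definition mprod :: "imat list \<Rightarrow> imat" where
  "mprod Ms = foldr mmul Ms idm"

definition banded_hessenberg :: "nat \<Rightarrow> imat \<Rightarrow> bool" where
  "banded_hessenberg p J \<longleftrightarrow>
     (\<forall>n. J n (n+1) = 1) \<and>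
     (\<forall>n m. m > n + 1 \<or> m + p < n \<longrightarrow> J n m = 0) \<and>
     (\<forall>n. J (n+p) n \<noteq> 0)"

text \<open>Polynomials P_n with P_0 = 1 determined by H v(z) = z v(z) for a lower Hessenberg
  matrix H with ones on the superdiagonal:
  P_(n+1) = z P_n - sum_(m<=n) H(n,m) P_m.  For J this is the paper's recurrence.\<close>
fun hpoly :: "imat \<Rightarrow> nat \<Rightarrow> complex poly" where
  "hpoly H 0 = 1"
| "hpoly H (Suc n) = [:0, 1:] * hpoly H n - (\<Sum>m\<in>{..n}. smult (H n m) (hpoly H m))"

text \<open>Darboux factors built from gamma (paper's indices of gamma are kept).\<close>
definition Umat :: "nat \<Rightarrow> (nat \<Rightarrow> complex) \<Rightarrow> imat" where
  "Umat p \<gamma> = (\<lambda>n m. if m = n then \<gamma> (n*(p+1)+1) else if m = n+1 then 1 else 0)"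

definition Lmat :: "nat \<Rightarrow> (nat \<Rightarrow> complex) \<Rightarrow> nat \<Rightarrow> imat" where
  "Lmat p \<gamma> j = (\<lambda>n m. if m = n then 1 else if n = m+1 then \<gamma> (m*(p+1)+j+1) else 0)"

definition darboux_factorization :: "nat \<Rightarrow> imat \<Rightarrow> complex \<Rightarrow> (nat \<Rightarrow> complex) \<Rightarrow> bool" where
  "darboux_factorization p J C \<gamma> \<longleftrightarrow>
     (\<forall>j\<in>{1..p}. \<forall>k. \<gamma> (k*(p+1)+j+1) \<noteq> 0) \<and>
     (\<lambda>n m. J n m - (if n = m then C else 0)) =
        mprod (map (Lmat p \<gamma>) [1..<p+1] @ [Umat p \<gamma>])"

definition dtrans :: "nat \<Rightarrow> imat \<Rightarrow> complex \<Rightarrow> (nat \<Rightarrow> complex) \<Rightarrow> nat \<Rightarrow> imat" where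
  "dtrans p J C \<gamma> j = (if j = 0 then J else
     (\<lambda>n m. (if n = m then C else 0) +
        mprod (map (Lmat p \<gamma>) [j+1..<p+1] @ [Umat p \<gamma>] @ map (Lmat p \<gamma>) [1..<j+1]) n m))"

definition lin_functional :: "(complex poly \<Rightarrow> complex) \<Rightarrow> bool" where
  "lin_functional \<mu> \<longleftrightarrow> (\<forall>q r. \<mu> (q + r) = \<mu> q + \<mu> r) \<and> (\<forall>c q. \<mu> (smult c q) = c * \<mu> q)"

definition p_orth_vector :: "nat \<Rightarrow> (nat \<Rightarrow> complex poly \<Rightarrow> complex) \<Rightarrow> (nat \<Rightarrow> complex poly) \<Rightarrow> bool" where
  "p_orth_vector p \<nu> Q \<longleftrightarrow>
     (\<forall>r\<in>{1..p}. lin_functional (\<nu> r) \<and>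
        (\<forall>k. (\<forall>n \<ge> k*p + r. \<nu> r (monom 1 k * Q n) = 0) \<and>
             \<nu> r (monom 1 k * Q (k*p + r - 1)) \<noteq> 0))"

definition shift_fun :: "complex \<Rightarrow> (complex poly \<Rightarrow> complex) \<Rightarrow> complex poly \<Rightarrow> complex" where
  "shift_fun C \<mu> = (\<lambda>q. \<mu> ([:-C, 1:] * q))"

end

theory Submission
  imports Defs
begin

text \<open>Fix \<open>j < p\<close> and write \<open>J(j) - CI = L B\<close> with \<open>L = L(j+1)\<close>; then \<open>J(j+1) - CI = B L\<close>.
  The eigenvector equations for \<open>J(j)\<close> and \<open>J(j+1)\<close> give \<open>P(j) = L P(j+1)\<close> and
  \<open>B P(j) = (z - C) P(j+1)\<close>. As \<open>L\<close> is unit lower bidiagonal with nonzero subdiagonal,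
  \<open>P(j)\<^sub>n\<close> is \<open>P(j+1)\<^sub>n\<close> plus a nonzero multiple of \<open>P(j+1)\<^sub>n\<^sub>-\<^sub>1\<close>, which turns the
  \<open>r\<close>-th orthogonality condition for \<open>P(j+1)\<close> into the \<open>(r+1)\<close>-st one for \<open>P(j)\<close>; this
  is (b). As \<open>B\<close> has lower bandwidth exactly \<open>p - 1\<close>, \<open>(z - C) P(j+1)\<^sub>n\<close> is a combination
  of the \<open>P(j)\<^sub>m\<close> with \<open>m \<ge> n - p + 1\<close>, with a nonzero coefficient at \<open>m = n - p + 1\<close>; this
  turns the first condition for \<open>P(j)\<close> into the \<open>p\<close>-th one for \<open>P(j+1)\<close> with respect to
  \<open>(z - C)\<nu>\<close>, which is (a).\<close>

definition row_finite :: "imat \<Rightarrow> bool" where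
  "row_finite A \<longleftrightarrow> (\<forall>n. finite {k. A n k \<noteq> 0})"

definition mat_act :: "imat \<Rightarrow> (nat \<Rightarrow> complex poly) \<Rightarrow> nat \<Rightarrow> complex poly" where
  "mat_act A v n = (\<Sum>k\<in>{k. A n k \<noteq> 0}. smult (A n k) (v k))"

definition add_diag :: "complex \<Rightarrow> imat \<Rightarrow> imat" where
  "add_diag C A = (\<lambda>n m. (if n = m then C else 0) + A n m)"

definition banded :: "nat \<Rightarrow> nat \<Rightarrow> imat \<Rightarrow> bool" where
  "banded a b A \<longleftrightarrow> (\<forall>n m. A n m \<noteq> 0 \<longrightarrow> m \<le> n + a \<and> n \<le> m + b)"

definition normal_banded :: "nat \<Rightarrow> nat \<Rightarrow> imat \<Rightarrow> bool" where
  "normal_banded a b A \<longleftrightarrow> banded a b A \<and> (\<forall>n. A n (n + a) = 1) \<and> (\<forall>n\<ge>b. A n (n - b) \<noteq> 0)"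

definition hessenberg :: "imat \<Rightarrow> bool" where
  "hessenberg H \<longleftrightarrow> (\<forall>n. H n (n + 1) = 1) \<and> (\<forall>n m. n + 1 < m \<longrightarrow> H n m = 0)"

section \<open>Row-finite infinite matrices\<close>

lemma mmul_eq_sum:
  assumes "finite S" "{k. A n k \<noteq> 0} \<subseteq> S"
  shows "mmul A B n m = (\<Sum>k\<in>S. A n k * B k m)"
  unfolding mmul_def by (rule sum.mono_neutral_left[OF assms]) auto

lemma mat_act_eq_sum:
  assumes "finite S" "{k. A n k \<noteq> 0} \<subseteq> S"
  shows "mat_act A v n = (\<Sum>k\<in>S. smult (A n k) (v k))"
  unfolding mat_act_def by (rule sum.mono_neutral_left[OF assms]) auto

lemma mmul_support:
  "{l. mmul A B n l \<noteq> 0} \<subseteq> (\<Union>k\<in>{k. A n k \<noteq> 0}. {l. B k l \<noteq> 0})"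
proof
  fix l assume "l \<in> {l. mmul A B n l \<noteq> 0}"
  then have "(\<Sum>k\<in>{k. A n k \<noteq> 0}. A n k * B k l) \<noteq> 0" by (simp add: mmul_def)
  then obtain k where "k \<in> {k. A n k \<noteq> 0}" "A n k * B k l \<noteq> 0" by (meson sum.neutral)
  then show "l \<in> (\<Union>k\<in>{k. A n k \<noteq> 0}. {l. B k l \<noteq> 0})" by auto
qed

lemma row_finite_mmul: "row_finite A \<Longrightarrow> row_finite B \<Longrightarrow> row_finite (mmul A B)"
  unfolding row_finite_def using mmul_support by (meson finite_UN_I finite_subset)

lemma row_finite_idm: "row_finite idm"
  unfolding row_finite_def idm_def by simp

lemma mmul_idm_left: "mmul idm A = A"
  by (intro ext) (simp add: mmul_def idm_def)

lemma mmul_idm_right: "row_finite A \<Longrightarrow> mmul A idm = A"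
  by (intro ext) (auto simp: mmul_def idm_def row_finite_def if_distrib cong: if_cong)

lemma mmul_assoc:
  assumes "row_finite A" "row_finite B"
  shows "mmul (mmul A B) D = mmul A (mmul B D)"
proof (intro ext)
  fix n m
  define S where "S = {k. A n k \<noteq> 0}"
  define T where "T = (\<Union>k\<in>S. {l. B k l \<noteq> 0})"
  have "finite S" using assms(1) by (simp add: row_finite_def S_def)
  then have fin_T: "finite T" using assms(2) by (simp add: row_finite_def T_def)
  have "mmul (mmul A B) D n m = (\<Sum>l\<in>T. mmul A B n l * D l m)"
    by (rule mmul_eq_sum[OF fin_T]) (use mmul_support in \<open>simp add: S_def T_def\<close>)
  also have "\<dots> = (\<Sum>k\<in>S. \<Sum>l\<in>T. A n k * B k l * D l m)"
    by (simp add: mmul_def S_def sum_distrib_right sum.swap[of _ T])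
  also have "\<dots> = (\<Sum>k\<in>S. A n k * mmul B D k m)"
  proof (rule sum.cong[OF refl])
    fix k assume "k \<in> S"
    then have "mmul B D k m = (\<Sum>l\<in>T. B k l * D l m)"
      by (intro mmul_eq_sum[OF fin_T]) (auto simp: T_def)
    then show "(\<Sum>l\<in>T. A n k * B k l * D l m) = A n k * mmul B D k m"
      by (simp add: sum_distrib_left mult.assoc)
  qed
  also have "\<dots> = mmul A (mmul B D) n m" by (simp add: mmul_def S_def)
  finally show "mmul (mmul A B) D n m = mmul A (mmul B D) n m" .
qed

lemma smult_sum_right: "smult a (\<Sum>x\<in>S. f x) = (\<Sum>x\<in>S. smult a (f x))"
  by (induction S rule: infinite_finite_induct) (auto simp: smult_add_right)

lemma mat_act_mmul:
  assumes "row_finite A" "row_finite B"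
  shows "mat_act (mmul A B) v n = mat_act A (mat_act B v) n"
proof -
  define S where "S = {k. A n k \<noteq> 0}"
  define T where "T = (\<Union>k\<in>S. {l. B k l \<noteq> 0})"
  have "finite S" using assms(1) by (simp add: row_finite_def S_def)
  then have fin_T: "finite T" using assms(2) by (simp add: row_finite_def T_def)
  have "mat_act (mmul A B) v n = (\<Sum>l\<in>T. smult (mmul A B n l) (v l))"
    by (rule mat_act_eq_sum[OF fin_T]) (use mmul_support in \<open>simp add: S_def T_def\<close>)
  also have "\<dots> = (\<Sum>k\<in>S. \<Sum>l\<in>T. smult (A n k * B k l) (v l))"
    by (simp add: mmul_def S_def smult_sum sum.swap[of _ T])
  also have "\<dots> = (\<Sum>k\<in>S. smult (A n k) (mat_act B v k))"
  proof (rule sum.cong[OF refl])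
    fix k assume "k \<in> S"
    then have "mat_act B v k = (\<Sum>l\<in>T. smult (B k l) (v l))"
      by (intro mat_act_eq_sum[OF fin_T]) (auto simp: T_def)
    then show "(\<Sum>l\<in>T. smult (A n k * B k l) (v l)) = smult (A n k) (mat_act B v k)"
      by (simp add: smult_sum_right smult_smult)
  qed
  also have "\<dots> = mat_act A (mat_act B v) n" by (simp add: mat_act_def S_def)
  finally show ?thesis .
qed

lemma mat_act_mult_left: "mat_act A (\<lambda>k. q * v k) n = q * mat_act A v n"
  by (simp add: mat_act_def sum_distrib_left mult_smult_right)

lemma mat_act_add_diag:
  assumes "row_finite A"
  shows "mat_act (add_diag C A) v n = smult C (v n) + mat_act A v n"
proof -
  define S where "S = insert n {k. A n k \<noteq> 0}"
  have fin_S: "finite S" using assms by (simp add: S_def row_finite_def)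
  have "mat_act (add_diag C A) v n = (\<Sum>k\<in>S. smult (add_diag C A n k) (v k))"
    by (rule mat_act_eq_sum[OF fin_S]) (auto simp: S_def add_diag_def)
  also have "\<dots> = (\<Sum>k\<in>S. if n = k then smult C (v k) else 0) + (\<Sum>k\<in>S. smult (A n k) (v k))"
    by (simp add: add_diag_def smult_add_left sum.distrib if_distrib[of "\<lambda>c. smult c _"] cong: if_cong)
  also have "(\<Sum>k\<in>S. if n = k then smult C (v k) else 0) = smult C (v n)"
    using fin_S by (simp add: S_def)
  also have "(\<Sum>k\<in>S. smult (A n k) (v k)) = mat_act A v n"
    by (rule mat_act_eq_sum[symmetric, OF fin_S]) (auto simp: S_def)
  finally show ?thesis .
qed

lemma mat_act_add_diag_eigen_iff:
  assumes "row_finite A"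
  shows "mat_act (add_diag C A) v n = [:0, 1:] * v n \<longleftrightarrow> mat_act A v n = [:-C, 1:] * v n"
proof -
  have "[:-C, 1:] * v n = [:0, 1:] * v n - smult C (v n)"
    by (simp add: algebra_simps)
  then show ?thesis by (auto simp: mat_act_add_diag[OF assms] algebra_simps)
qed

lemma mprod_Cons: "mprod (M # Ms) = mmul M (mprod Ms)"
  by (simp add: mprod_def)

lemma row_finite_mprod: "\<forall>M\<in>set Ms. row_finite M \<Longrightarrow> row_finite (mprod Ms)"
  by (induction Ms) (auto simp: mprod_def row_finite_idm row_finite_mmul)

lemma mprod_append:
  "\<forall>M\<in>set Ms. row_finite M \<Longrightarrow> mprod (Ms @ Ns) = mmul (mprod Ms) (mprod Ns)"
proof (induction Ms)
  case Nil then show ?case by (simp add: mprod_def mmul_idm_left)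
next
  case (Cons M Ms)
  then show ?case by (simp add: mprod_Cons mmul_assoc row_finite_mprod)
qed

lemma mprod_snoc:
  "\<forall>M\<in>set Ms. row_finite M \<Longrightarrow> row_finite N \<Longrightarrow> mprod (Ms @ [N]) = mmul (mprod Ms) N"
  by (simp add: mprod_append mprod_Cons mmul_idm_right mprod_def[of "[]"])

section \<open>Banded matrices\<close>

lemma banded_support: "banded a b A \<Longrightarrow> {k. A n k \<noteq> 0} \<subseteq> {..n + a}"
  unfolding banded_def by auto

lemma banded_row_finite: "banded a b A \<Longrightarrow> row_finite A"
  unfolding row_finite_def by (blast intro: finite_subset[OF banded_support] finite_atMost)

lemma normal_banded_row_finite: "normal_banded a b A \<Longrightarrow> row_finite A"
  unfolding normal_banded_def using banded_row_finite by blast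

lemma banded_mmul:
  assumes "banded a1 b1 A" "banded a2 b2 B"
  shows "banded (a1 + a2) (b1 + b2) (mmul A B)"
  unfolding banded_def
proof (intro allI impI)
  fix n m assume "mmul A B n m \<noteq> 0"
  then obtain k where "A n k \<noteq> 0" "B k m \<noteq> 0" using mmul_support by blast
  then show "m \<le> n + (a1 + a2) \<and> n \<le> m + (b1 + b2)"
    using assms unfolding banded_def by fastforce
qed

lemma sum_eq_single_term:
  assumes "finite S" "c \<in> S" "\<And>k. k \<in> S \<Longrightarrow> k \<noteq> c \<Longrightarrow> f k = 0"
  shows "sum f S = f c"
  using sum.remove[OF assms(1,2), of f] sum.neutral[of "S - {c}" f] assms(3) by auto

lemma mmul_upper_edge:
  assumes "banded a1 b1 A" "banded a2 b2 B"
  shows "mmul A B n (n + a1 + a2) = A n (n + a1) * B (n + a1) (n + a1 + a2)"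
proof -
  have "mmul A B n (n + a1 + a2) = (\<Sum>k\<in>{..n + a1}. A n k * B k (n + a1 + a2))"
    by (rule mmul_eq_sum) (use banded_support[OF assms(1)] in auto)
  also have "\<dots> = A n (n + a1) * B (n + a1) (n + a1 + a2)"
  proof (rule sum_eq_single_term)
    fix k assume "k \<in> {..n + a1}" "k \<noteq> n + a1"
    then show "A n k * B k (n + a1 + a2) = 0"
      using assms(2) unfolding banded_def by (metis add_le_cancel_right le_antisym atMost_iff mult_eq_0_iff)
  qed auto
  finally show ?thesis .
qed

lemma mmul_lower_edge:
  assumes "banded a1 b1 A" "banded a2 b2 B" "b1 + b2 \<le> n"
  shows "mmul A B n (n - b1 - b2) = A n (n - b1) * B (n - b1) (n - b1 - b2)"
proof -
  have "mmul A B n (n - b1 - b2) = (\<Sum>k\<in>{..n + a1}. A n k * B k (n - b1 - b2))"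
    by (rule mmul_eq_sum) (use banded_support[OF assms(1)] in auto)
  also have "\<dots> = A n (n - b1) * B (n - b1) (n - b1 - b2)"
  proof (rule sum_eq_single_term)
    fix k assume "k \<noteq> n - b1"
    show "A n k * B k (n - b1 - b2) = 0"
    proof (rule ccontr)
      assume "A n k * B k (n - b1 - b2) \<noteq> 0"
      then have "n \<le> k + b1" "k \<le> n - b1 - b2 + b2"
        using assms(1,2) unfolding banded_def by auto
      then show False using \<open>k \<noteq> n - b1\<close> assms(3) by linarith
    qed
  qed auto
  finally show ?thesis .
qed

lemma normal_banded_mmul:
  assumes "normal_banded a1 b1 A" "normal_banded a2 b2 B"
  shows "normal_banded (a1 + a2) (b1 + b2) (mmul A B)"
proof -
  have bA: "banded a1 b1 A" and bB: "banded a2 b2 B"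
    using assms by (auto simp: normal_banded_def)
  have "mmul A B n (n + (a1 + a2)) = 1" for n
  proof -
    have "A n (n + a1) = 1" "B (n + a1) (n + a1 + a2) = 1"
      using assms unfolding normal_banded_def by blast+
    then show ?thesis using mmul_upper_edge[OF bA bB, of n] by (simp add: add.assoc)
  qed
  moreover have "mmul A B n (n - (b1 + b2)) \<noteq> 0" if "b1 + b2 \<le> n" for n
  proof -
    have "A n (n - b1) \<noteq> 0" using assms(1) that unfolding normal_banded_def by auto
    moreover have "b2 \<le> n - b1" using that by simp
    then have "B (n - b1) (n - b1 - b2) \<noteq> 0" using assms(2) unfolding normal_banded_def by blast
    ultimately show ?thesis using mmul_lower_edge[OF bA bB that] by (simp add: diff_diff_add)
  qed
  ultimately show ?thesis using banded_mmul[OF bA bB] by (simp add: normal_banded_def)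
qed

lemma normal_banded_mprod:
  "\<forall>M\<in>set Ms. normal_banded 0 1 M \<Longrightarrow> normal_banded 0 (length Ms) (mprod Ms)"
proof (induction Ms)
  case Nil
  then show ?case by (auto simp: mprod_def normal_banded_def banded_def idm_def)
next
  case (Cons M Ms)
  then show ?case using normal_banded_mmul[of 0 1 M 0 "length Ms"] by (simp add: mprod_Cons)
qed

lemma hessenberg_add_diag:
  assumes "normal_banded 1 b A"
  shows "hessenberg (add_diag C A)"
  using assms unfolding hessenberg_def add_diag_def normal_banded_def banded_def
  by (auto dest: leD)

section \<open>The polynomials of a Hessenberg matrix\<close>

lemma hessenberg_support: "hessenberg H \<Longrightarrow> {k. H n k \<noteq> 0} \<subseteq> {..Suc n}"
  by (auto simp: hessenberg_def not_le[symmetric])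

lemma mat_act_hessenberg:
  assumes "hessenberg H"
  shows "mat_act H v n = v (Suc n) + (\<Sum>k\<in>{..n}. smult (H n k) (v k))"
proof -
  have "mat_act H v n = (\<Sum>k\<in>{..Suc n}. smult (H n k) (v k))"
    by (rule mat_act_eq_sum[OF finite_atMost hessenberg_support[OF assms]])
  also have "\<dots> = smult (H n (Suc n)) (v (Suc n)) + (\<Sum>k\<in>{..n}. smult (H n k) (v k))"
    by (simp only: sum.atMost_Suc add.commute)
  also have "H n (Suc n) = 1" using assms by (simp add: hessenberg_def)
  finally show ?thesis by simp
qed

lemma hpoly_eigenvector:
  "hessenberg H \<Longrightarrow> mat_act H (hpoly H) n = [:0, 1:] * hpoly H n"
  by (simp only: mat_act_hessenberg hpoly.simps(2) diff_add_cancel)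

lemma hpoly_unique:
  assumes "hessenberg H" "v 0 = 1" "\<And>n. mat_act H v n = [:0, 1:] * v n"
  shows "v n = hpoly H n"
proof (induction n rule: less_induct)
  case (less n)
  show ?case
  proof (cases n)
    case 0 then show ?thesis using assms(2) by simp
  next
    case (Suc m)
    have "(\<Sum>k\<in>{..m}. smult (H m k) (v k)) = (\<Sum>k\<in>{..m}. smult (H m k) (hpoly H k))"
      using less Suc by (intro sum.cong) auto
    then show ?thesis
      using assms(3)[of m] less[of m] Suc by (simp add: mat_act_hessenberg[OF assms(1)] eq_diff_eq)
  qed
qed

lemma hpoly_darboux_step:
  fixes C :: complex
  assumes L: "normal_banded 0 1 L" and B: "normal_banded 1 b B"
  defines "H \<equiv> add_diag C (mmul L B)" and "H' \<equiv> add_diag C (mmul B L)"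
  shows "hpoly H = mat_act L (hpoly H')"
    and "mat_act B (hpoly H) n = [:-C, 1:] * hpoly H' n"
proof -
  have fin_L: "row_finite L" and fin_B: "row_finite B"
    using L B normal_banded_row_finite by blast+
  have LB: "normal_banded 1 (b + 1) (mmul L B)" and BL: "normal_banded 1 (b + 1) (mmul B L)"
    using normal_banded_mmul[OF L B] normal_banded_mmul[OF B L] by simp_all
  define w where "w = mat_act L (hpoly H')"
  have B_w: "mat_act B w n = [:-C, 1:] * hpoly H' n" for n
  proof -
    have "mat_act (add_diag C (mmul B L)) (hpoly H') n = [:0, 1:] * hpoly H' n"
      unfolding H'_def by (rule hpoly_eigenvector[OF hessenberg_add_diag[OF BL]])
    then have "mat_act (mmul B L) (hpoly H') n = [:-C, 1:] * hpoly H' n"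
      using mat_act_add_diag_eigen_iff[OF normal_banded_row_finite[OF BL]] by blast
    then show ?thesis by (simp only: w_def mat_act_mmul[OF fin_B fin_L, symmetric])
  qed
  have "mat_act H w n = [:0, 1:] * w n" for n
  proof -
    have "mat_act B w = (\<lambda>k. [:-C, 1:] * hpoly H' k)" by (intro ext B_w)
    then have "mat_act (mmul L B) w n = [:-C, 1:] * w n"
      by (simp only: mat_act_mmul[OF fin_L fin_B] mat_act_mult_left w_def)
    then show ?thesis
      unfolding H_def using mat_act_add_diag_eigen_iff[OF normal_banded_row_finite[OF LB]] by blast
  qed
  moreover have "w 0 = 1"
  proof -
    have "{k. L 0 k \<noteq> 0} \<subseteq> {0}" using L by (auto simp: normal_banded_def banded_def)
    then show ?thesis
      using mat_act_eq_sum[of "{0}" L 0] L by (simp add: w_def normal_banded_def)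
  qed
  ultimately have w: "w = hpoly H"
    using hpoly_unique[OF hessenberg_add_diag[OF LB]] unfolding H_def by blast
  then show "hpoly H = mat_act L (hpoly H')" by (simp only: w_def)
  show "mat_act B (hpoly H) n = [:-C, 1:] * hpoly H' n" using B_w w by simp
qed

section \<open>Transfer of orthogonality conditions\<close>

definition p_orth_component :: "nat \<Rightarrow> nat \<Rightarrow> (complex poly \<Rightarrow> complex) \<Rightarrow> (nat \<Rightarrow> complex poly) \<Rightarrow> bool" where
  "p_orth_component p r \<mu> Q \<longleftrightarrow> lin_functional \<mu> \<and>
     (\<forall>k. (\<forall>n \<ge> k*p + r. \<mu> (monom 1 k * Q n) = 0) \<and> \<mu> (monom 1 k * Q (k*p + r - 1)) \<noteq> 0)"

lemma p_orth_vector_iff: "p_orth_vector p \<nu> Q \<longleftrightarrow> (\<forall>r\<in>{1..p}. p_orth_component p r (\<nu> r) Q)"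
  by (simp add: p_orth_vector_def p_orth_component_def)

lemma p_orth_vector_replace_last:
  assumes "p_orth_vector p \<nu> Q" "p_orth_component p p \<mu> Q"
  shows "p_orth_vector p (\<lambda>r. if r < p then \<nu> r else \<mu>) Q"
  using assms by (auto simp: p_orth_vector_iff)

lemma p_orth_vector_prepend:
  assumes "p_orth_component p 1 \<mu> Q" "\<forall>r\<in>{1..<p}. p_orth_component p (Suc r) (\<nu> r) Q"
  shows "p_orth_vector p (\<lambda>r. if r = 1 then \<mu> else \<nu> (r - 1)) Q"
  unfolding p_orth_vector_iff
proof
  fix r assume r: "r \<in> {1..p}"
  show "p_orth_component p r (if r = 1 then \<mu> else \<nu> (r - 1)) Q"
  proof (cases "r = 1")
    case False
    then have "r - 1 \<in> {1..<p}" "Suc (r - 1) = r" using r by auto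
    then show ?thesis using assms(2) False by metis
  qed (use assms(1) in simp)
qed

lemma lin_functional_sum:
  assumes "lin_functional \<mu>" "finite S"
  shows "\<mu> (\<Sum>k\<in>S. smult (c k) (q k)) = (\<Sum>k\<in>S. c k * \<mu> (q k))"
  using assms(2)
proof induction
  case empty
  have "\<mu> (smult 0 0) = 0 * \<mu> 0" using assms(1) unfolding lin_functional_def by blast
  then show ?case by simp
next
  case (insert x F) then show ?case using assms(1) unfolding lin_functional_def by simp
qed

lemma lin_functional_shift_fun: "lin_functional \<mu> \<Longrightarrow> lin_functional (shift_fun C \<mu>)"
  unfolding lin_functional_def shift_fun_def by (simp only: distrib_left mult_smult_right) auto

lemma p_orth_component_Suc:
  assumes orth: "p_orth_component p r \<mu> Q'" and "1 \<le> r"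
    and Q: "\<And>n. 1 \<le> n \<Longrightarrow> Q n = Q' n + smult (c n) (Q' (n - 1))" and c: "\<And>n. c n \<noteq> 0"
  shows "p_orth_component p (Suc r) \<mu> Q"
proof -
  have lin: "lin_functional \<mu>" using orth by (simp add: p_orth_component_def)
  have expand: "\<mu> (monom 1 k * Q n) = \<mu> (monom 1 k * Q' n) + c n * \<mu> (monom 1 k * Q' (n - 1))"
    if "1 \<le> n" for k n
    using lin unfolding Q[OF that] lin_functional_def by (simp add: distrib_left mult_smult_right)
  have "\<mu> (monom 1 k * Q n) = 0" if "k*p + Suc r \<le> n" for k n
    using expand[of n k] orth that \<open>1 \<le> r\<close> by (simp add: p_orth_component_def)
  moreover have "\<mu> (monom 1 k * Q (k*p + Suc r - 1)) \<noteq> 0" for k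
    using expand[of "k*p + r" k] orth c \<open>1 \<le> r\<close> by (simp add: p_orth_component_def)
  ultimately show ?thesis using lin by (simp add: p_orth_component_def)
qed

lemma p_orth_component_shift_fun:
  assumes orth: "p_orth_component p 1 \<mu> Q" and "1 \<le> p"
    and B: "normal_banded 1 (p - 1) B" and BQ: "\<And>n. mat_act B Q n = [:-C, 1:] * Q' n"
  shows "p_orth_component p p (shift_fun C \<mu>) Q'"
proof -
  have lin: "lin_functional \<mu>" using orth by (simp add: p_orth_component_def)
  have fin: "finite {m. B n m \<noteq> 0}" for n
    using normal_banded_row_finite[OF B] by (simp add: row_finite_def)
  have lower: "n \<le> m + (p - 1)" if "B n m \<noteq> 0" for n m
    using that B by (simp add: normal_banded_def banded_def)
  have expand: "shift_fun C \<mu> (monom 1 k * Q' n) =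
      (\<Sum>m\<in>{m. B n m \<noteq> 0}. B n m * \<mu> (monom 1 k * Q m))" for k n
  proof -
    have "[:-C, 1:] * (monom 1 k * Q' n) = monom 1 k * mat_act B Q n"
      by (simp only: BQ mult.left_commute)
    also have "\<dots> = (\<Sum>m\<in>{m. B n m \<noteq> 0}. smult (B n m) (monom 1 k * Q m))"
      by (simp add: mat_act_def sum_distrib_left mult_smult_right)
    finally show ?thesis by (simp add: shift_fun_def lin_functional_sum[OF lin fin])
  qed
  have vanish: "\<mu> (monom 1 k * Q m) = 0" if "k*p < m" for k m
    using orth that by (simp add: p_orth_component_def)
  have "shift_fun C \<mu> (monom 1 k * Q' n) = 0" if "k*p + p \<le> n" for k n
    unfolding expand
  proof (intro sum.neutral ballI)
    fix m assume "m \<in> {m. B n m \<noteq> 0}"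
    then have "k*p < m" using lower[of n m] that \<open>1 \<le> p\<close> by auto
    then show "B n m * \<mu> (monom 1 k * Q m) = 0" by (simp add: vanish)
  qed
  moreover have "shift_fun C \<mu> (monom 1 k * Q' (k*p + p - 1)) \<noteq> 0" for k
  proof -
    define n where "n = k*p + p - 1"
    have "n - (p - 1) = k*p" "p - 1 \<le> n" using \<open>1 \<le> p\<close> by (auto simp: n_def)
    then have "B n (k*p) \<noteq> 0" using B unfolding normal_banded_def by metis
    have "shift_fun C \<mu> (monom 1 k * Q' n) = B n (k*p) * \<mu> (monom 1 k * Q (k*p))"
      unfolding expand
    proof (rule sum_eq_single_term)
      fix m assume "m \<in> {m. B n m \<noteq> 0}" "m \<noteq> k*p"
      then have "k*p < m" using lower[of n m] \<open>n - (p - 1) = k*p\<close> by auto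
      then show "B n m * \<mu> (monom 1 k * Q m) = 0" by (simp add: vanish)
    qed (use fin \<open>B n (k*p) \<noteq> 0\<close> in auto)
    then show ?thesis
      using \<open>B n (k*p) \<noteq> 0\<close> orth by (simp add: n_def p_orth_component_def)
  qed
  ultimately show ?thesis using lin_functional_shift_fun[OF lin] by (simp add: p_orth_component_def)
qed

section \<open>Darboux transformations\<close>

lemma banded_Lmat: "banded 0 1 (Lmat p \<gamma> i)"
  by (auto simp: banded_def Lmat_def)

lemma banded_Umat: "banded 1 0 (Umat p \<gamma>)"
  by (auto simp: banded_def Umat_def)

lemma row_finite_Lmat: "row_finite (Lmat p \<gamma> i)"
  by (rule banded_row_finite[OF banded_Lmat])

lemma row_finite_Umat: "row_finite (Umat p \<gamma>)"
  by (rule banded_row_finite[OF banded_Umat])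

lemma row_finite_Lmats: "\<forall>M\<in>set (map (Lmat p \<gamma>) is). row_finite M"
  using row_finite_Lmat by auto

lemma normal_banded_Lmat:
  assumes "darboux_factorization p J C \<gamma>" "i \<in> {1..p}"
  shows "normal_banded 0 1 (Lmat p \<gamma> i)"
proof -
  have "\<gamma> (k*(p+1) + i + 1) \<noteq> 0" for k
    using assms unfolding darboux_factorization_def by blast
  moreover have "Lmat p \<gamma> i n (n - 1) = \<gamma> ((n - 1)*(p+1) + i + 1)" if "1 \<le> n" for n
    using that by (simp add: Lmat_def)
  ultimately show ?thesis using banded_Lmat unfolding normal_banded_def
    by (metis Lmat_def add_0_right)
qed

lemma mat_act_Lmat:
  "1 \<le> n \<Longrightarrow> mat_act (Lmat p \<gamma> i) v n = v n + smult (\<gamma> ((n - 1)*(p + 1) + i + 1)) (v (n - 1))"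
  by (subst mat_act_eq_sum[of "{n - 1, n}"]) (auto simp: Lmat_def)

lemma normal_banded_mprod_Lmat:
  assumes "darboux_factorization p J C \<gamma>" "set is \<subseteq> {1..p}"
  shows "normal_banded 0 (length is) (mprod (map (Lmat p \<gamma>) is))"
proof -
  have "\<forall>M\<in>set (map (Lmat p \<gamma>) is). normal_banded 0 1 M"
    using normal_banded_Lmat[OF assms(1)] assms(2) by auto
  then show ?thesis using normal_banded_mprod by fastforce
qed

lemma darboux_factorization_add_diag:
  assumes "darboux_factorization p J C \<gamma>"
  shows "J = add_diag C (mprod (map (Lmat p \<gamma>) [1..<p+1] @ [Umat p \<gamma>]))"
proof (intro ext)
  fix n m
  let ?M = "mprod (map (Lmat p \<gamma>) [1..<p+1] @ [Umat p \<gamma>])"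
  have "(\<lambda>n m. J n m - (if n = m then C else 0)) = ?M"
    using assms unfolding darboux_factorization_def by blast
  then have "J n m - (if n = m then C else 0) = ?M n m"
    by (rule fun_cong[OF fun_cong])
  then show "J n m = add_diag C ?M n m"
    unfolding add_diag_def by (simp only: diff_eq_eq add.commute)
qed

text \<open>The diagonal of \<open>U\<close> is nonzero because the extreme subdiagonal of \<open>J\<close> is the product
  of those of \<open>L(1) \<cdots> L(p)\<close> and of \<open>U\<close>.\<close>

lemma normal_banded_Umat:
  assumes "1 \<le> p" "banded_hessenberg p J" "darboux_factorization p J C \<gamma>"
  shows "normal_banded 1 0 (Umat p \<gamma>)"
proof -
  define Lp where "Lp = mprod (map (Lmat p \<gamma>) [1..<p+1])"
  have Lp: "normal_banded 0 p Lp"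
    using normal_banded_mprod_Lmat[OF assms(3), of "[1..<p+1]"]
    by (simp add: Lp_def atLeastLessThanSuc_atLeastAtMost del: upt_Suc)
  have J_eq: "J = add_diag C (mmul Lp (Umat p \<gamma>))"
    using darboux_factorization_add_diag[OF assms(3)] mprod_snoc[OF row_finite_Lmats row_finite_Umat]
    by (simp add: Lp_def del: upt_Suc)
  have "Umat p \<gamma> n n \<noteq> 0" for n
  proof -
    have "J (n + p) n \<noteq> 0" using assms(2) by (simp add: banded_hessenberg_def)
    also have "J (n + p) n = mmul Lp (Umat p \<gamma>) (n + p) n"
      using assms(1) by (simp add: J_eq add_diag_def)
    also have "\<dots> = Lp (n + p) n * Umat p \<gamma> n n"
      using mmul_lower_edge[of 0 p Lp 1 0 "Umat p \<gamma>" "n + p"] Lp banded_Umat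
      by (simp add: normal_banded_def)
    finally show ?thesis by simp
  qed
  then show ?thesis using banded_Umat by (simp add: normal_banded_def Umat_def)
qed

lemma dtrans_cyclic_factorization:
  assumes "1 \<le> p" "banded_hessenberg p J" "darboux_factorization p J C \<gamma>" "j < p"
  obtains B where "normal_banded 1 (p - 1) B"
    and "dtrans p J C \<gamma> j = add_diag C (mmul (Lmat p \<gamma> (j + 1)) B)"
    and "dtrans p J C \<gamma> (j + 1) = add_diag C (mmul B (Lmat p \<gamma> (j + 1)))"
proof
  let ?L = "Lmat p \<gamma>" and ?U = "Umat p \<gamma>"
  define B where "B = mprod (map ?L [j+2..<p+1] @ [?U] @ map ?L [1..<j+1])"
  have "B = mmul (mprod (map ?L [j+2..<p+1])) (mmul ?U (mprod (map ?L [1..<j+1])))"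
    unfolding B_def by (simp only: mprod_append[OF row_finite_Lmats] append_Cons append_Nil mprod_Cons)
  moreover have "normal_banded 0 (p - (j + 1)) (mprod (map ?L [j+2..<p+1]))"
    "normal_banded 0 j (mprod (map ?L [1..<j+1]))"
    using normal_banded_mprod_Lmat[OF assms(3), of "[j+2..<p+1]"]
      normal_banded_mprod_Lmat[OF assms(3), of "[1..<j+1]"] assms(4)
    by (auto simp: atLeastLessThanSuc_atLeastAtMost simp del: upt_Suc)
  ultimately have "normal_banded (0 + (1 + 0)) (p - (j + 1) + (0 + j)) B"
    using normal_banded_Umat[OF assms(1-3)] by (simp only: normal_banded_mmul)
  then show "normal_banded 1 (p - 1) B" using assms(4) by simp
  have "[j+1..<p+1] = (j + 1) # [j+2..<p+1]" using assms(4) by (simp add: upt_conv_Cons)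
  then have "mprod (map ?L [j+1..<p+1] @ [?U] @ map ?L [1..<j+1]) = mmul (?L (j + 1)) B"
    by (simp only: B_def list.map append_Cons mprod_Cons)
  moreover note darboux_factorization_add_diag[OF assms(3)]
  ultimately show "dtrans p J C \<gamma> j = add_diag C (mmul (?L (j + 1)) B)"
    by (cases "j = 0") (simp_all add: dtrans_def add_diag_def del: upt_Suc)
  have "map ?L [1..<j+2] = map ?L [1..<j+1] @ [?L (j + 1)]" by simp
  then have "mprod (map ?L [j+2..<p+1] @ [?U] @ map ?L [1..<j+2])
      = mprod ((map ?L [j+2..<p+1] @ [?U] @ map ?L [1..<j+1]) @ [?L (j + 1)])"
    by (simp only: append_assoc)
  also have "\<dots> = mmul B (?L (j + 1))" unfolding B_def
    by (rule mprod_snoc) (auto simp: row_finite_Lmat row_finite_Umat)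
  finally have "mprod (map ?L [j+2..<p+1] @ [?U] @ map ?L [1..<j+2]) = mmul B (?L (j + 1))" .
  then show "dtrans p J C \<gamma> (j + 1) = add_diag C (mmul B (?L (j + 1)))"
    by (simp add: dtrans_def add_diag_def del: upt_Suc)
qed

text \<open>The hypothesis \<open>P\<^sub>n(C) \<noteq> 0\<close> is what guarantees that a Darboux factorization exists.\<close>

theorem lemma5:
  fixes p :: nat and J :: imat and C :: complex and \<gamma> :: "nat \<Rightarrow> complex"
    and \<nu> :: "nat \<Rightarrow> nat \<Rightarrow> complex poly \<Rightarrow> complex"
  assumes "p \<ge> 1"
    and "banded_hessenberg p J"
    and "\<forall>n\<ge>1. poly (hpoly J n) C \<noteq> 0"
    and "darboux_factorization p J C \<gamma>"
    and "\<forall>j\<le>p. p_orth_vector p (\<nu> j) (hpoly (dtrans p J C \<gamma> j))"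
  shows "\<forall>j<p.
     p_orth_vector p (\<lambda>r. if r < p then \<nu> (j+1) r else shift_fun C (\<nu> j 1))
        (hpoly (dtrans p J C \<gamma> (j+1)))
   \<and> p_orth_vector p (\<lambda>r. if r = 1 then \<nu> j 1 else \<nu> (j+1) (r - 1))
        (hpoly (dtrans p J C \<gamma> j))"
proof (intro allI impI)
  fix j assume "j < p"
  obtain B where B: "normal_banded 1 (p - 1) B"
    and dj: "dtrans p J C \<gamma> j = add_diag C (mmul (Lmat p \<gamma> (j + 1)) B)"
    and dj1: "dtrans p J C \<gamma> (j + 1) = add_diag C (mmul B (Lmat p \<gamma> (j + 1)))"
    using dtrans_cyclic_factorization[OF assms(1,2,4) \<open>j < p\<close>] .
  define Q Q' where "Q = hpoly (dtrans p J C \<gamma> j)" and "Q' = hpoly (dtrans p J C \<gamma> (j + 1))"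
  have L: "normal_banded 0 1 (Lmat p \<gamma> (j + 1))"
    using normal_banded_Lmat[OF assms(4)] \<open>j < p\<close> by simp
  have "Q = mat_act (Lmat p \<gamma> (j + 1)) Q'"
    unfolding Q_def Q'_def dj dj1 by (rule hpoly_darboux_step(1)[OF L B])
  then have Q_Q': "Q n = Q' n + smult (\<gamma> ((n - 1)*(p + 1) + (j + 1) + 1)) (Q' (n - 1))"
    if "1 \<le> n" for n
    using mat_act_Lmat[OF that] by simp
  have BQ: "mat_act B Q n = [:-C, 1:] * Q' n" for n
    unfolding Q_def Q'_def dj dj1 by (rule hpoly_darboux_step(2)[OF L B])
  have "j + 1 \<in> {1..p}" using \<open>j < p\<close> by simp
  then have \<gamma>: "\<gamma> ((n - 1)*(p + 1) + (j + 1) + 1) \<noteq> 0" for n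
    using assms(4) unfolding darboux_factorization_def by blast
  have orth: "p_orth_vector p (\<nu> j) Q" "p_orth_vector p (\<nu> (j + 1)) Q'"
    using assms(5) \<open>j < p\<close> by (simp_all add: Q_def Q'_def)
  then have first: "p_orth_component p 1 (\<nu> j 1) Q"
    using assms(1) by (simp add: p_orth_vector_iff)
  have "p_orth_component p p (shift_fun C (\<nu> j 1)) Q'"
    by (rule p_orth_component_shift_fun[OF first assms(1) B BQ])
  moreover have "\<forall>r\<in>{1..<p}. p_orth_component p (Suc r) (\<nu> (j + 1) r) Q"
    using p_orth_component_Suc[where c = "\<lambda>n. \<gamma> ((n - 1)*(p + 1) + (j + 1) + 1)", OF _ _ Q_Q' \<gamma>]
      orth(2) by (auto simp: p_orth_vector_iff)
  ultimately show "p_orth_vector p (\<lambda>r. if r < p then \<nu> (j+1) r else shift_fun C (\<nu> j 1)) Q'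
      \<and> p_orth_vector p (\<lambda>r. if r = 1 then \<nu> j 1 else \<nu> (j+1) (r - 1)) Q"
    by (intro conjI p_orth_vector_replace_last[OF orth(2)] p_orth_vector_prepend[OF first])
qed

end
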